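(* Let $V$ be a finite set and let $A$ be a real symmetric matrix indexed by $V$. If $A$ does not contain any self-contained family of weighted chordless walks, then $A$ has a simplicial vertex.
   Context: An element $v\in V$ is simplicial in $A$ if $A_{yz}\ge\min\{A_{vy},A_{vz}\}$ for all distinct $y,z\in V\setminus\{v\}$. A walk is an ordered sequence $W=(v_0,\dots,v_p)$ ($p\ge1$) of elements of $V$; $V(W)=\{v_0,\dots,v_p\}$, $I(W)=\{v_1,\dots,v_{p-1}\}$. $W$ is weighted chordless in $A$ if $A_{v_{i-1}v_{i+1}}<\min\{A_{v_{i-1}v_i},A_{v_{i+1}v_i}\}$ for $1\le i\le p-1$. A finite family $\{W_1,\dots,W_k\}$ of walks is self-contained if $\bigcup_h V(W_h)=\bigcup_h I(W_h)$. *)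

theory Defs
  imports Complex_Main
begin

text \<open>A real symmetric matrix indexed by a finite set V is modelled as a function
  A :: 'a \<Rightarrow> 'a \<Rightarrow> real, symmetric on V.
  A walk (v_0,...,v_p), p \<ge> 1, is a list of length p+1 \<ge> 2.\<close>

definition simplicial :: "'a set \<Rightarrow> ('a \<Rightarrow> 'a \<Rightarrow> real) \<Rightarrow> 'a \<Rightarrow> bool" where
  "simplicial V A v \<longleftrightarrow> v \<in> V \<and>
     (\<forall>y \<in> V - {v}. \<forall>z \<in> V - {v}. y \<noteq> z \<longrightarrow> A y z \<ge> min (A v y) (A v z))"

definition walk :: "'a set \<Rightarrow> 'a list \<Rightarrow> bool" where
  "walk V W \<longleftrightarrow> length W \<ge> 2 \<and> set W \<subseteq> V"

definition walk_verts :: "'a list \<Rightarrow> 'a set" where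
  "walk_verts W = set W"

definition walk_inner :: "'a list \<Rightarrow> 'a set" where
  "walk_inner W = {W ! i | i. 1 \<le> i \<and> i + 1 < length W}"

definition weighted_chordless :: "('a \<Rightarrow> 'a \<Rightarrow> real) \<Rightarrow> 'a list \<Rightarrow> bool" where
  "weighted_chordless A W \<longleftrightarrow>
     (\<forall>i. 1 \<le> i \<and> i + 1 < length W \<longrightarrow>
        A (W ! (i - 1)) (W ! (i + 1)) < min (A (W ! (i - 1)) (W ! i)) (A (W ! (i + 1)) (W ! i)))"

definition self_contained :: "'a list set \<Rightarrow> bool" where
  "self_contained F \<longleftrightarrow> (\<Union>W\<in>F. walk_verts W) = (\<Union>W\<in>F. walk_inner W)"

definition has_sc_chordless_family :: "'a set \<Rightarrow> ('a \<Rightarrow> 'a \<Rightarrow> real) \<Rightarrow> bool" where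
  "has_sc_chordless_family V A \<longleftrightarrow>
     (\<exists>F. finite F \<and> F \<noteq> {} \<and> (\<forall>W\<in>F. walk V W \<and> weighted_chordless A W) \<and> self_contained F)"

end

theory Submission
  imports Defs
begin

text \<open>If no vertex is simplicial, every vertex v has a witness pair y, z with
  A y z < min (A v y) (A v z), i.e. the walk (y, v, z) is weighted chordless.
  These walks, one centred at each vertex, have every vertex as an inner vertex
  and use only vertices of V, so together they form a self-contained family.\<close>

lemma walk_inner_three: "walk_inner [a, b, c] = {b}"
proof -
  have "(1 \<le> i \<and> i + 1 < length [a, b, c]) \<longleftrightarrow> i = 1" for i :: nat
    by auto
  then show ?thesis
    unfolding walk_inner_def by auto
qed

lemma weighted_chordless_three_iff:
  "weighted_chordless A [a, b, c] \<longleftrightarrow> A a c < min (A a b) (A c b)"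
proof -
  have "(1 \<le> i \<and> i + 1 < length [a, b, c]) \<longleftrightarrow> i = 1" for i :: nat
    by auto
  then show ?thesis
    unfolding weighted_chordless_def by auto
qed

lemma chordless_walk_through_non_simplicial:
  assumes "v \<in> V" and "\<not> simplicial V A v"
    and sym: "\<forall>x\<in>V. \<forall>y\<in>V. A x y = A y x"
  shows "\<exists>y z. walk V [y, v, z] \<and> weighted_chordless A [y, v, z]"
proof -
  obtain y z where y: "y \<in> V" and z: "z \<in> V" and "\<not> A y z \<ge> min (A v y) (A v z)"
    using assms(1,2) unfolding simplicial_def by blast
  then have "A y z < min (A y v) (A z v)"
    using sym assms(1) by (simp add: not_le)
  with y z assms(1) show ?thesis
    by (auto simp: walk_def weighted_chordless_three_iff)
qed

lemma self_contained_centred_walks: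
  assumes "\<And>v. v \<in> V \<Longrightarrow> y v \<in> V \<and> z v \<in> V"
  shows "self_contained ((\<lambda>v. [y v, v, z v]) ` V)"
proof -
  have "(\<Union>v\<in>V. walk_inner [y v, v, z v]) = V"
    by (simp add: walk_inner_three)
  moreover have "(\<Union>v\<in>V. walk_verts [y v, v, z v]) = V"
    using assms by (auto simp: walk_verts_def)
  ultimately show ?thesis
    unfolding self_contained_def by simp
qed

theorem lemma6:
  fixes V :: "'a set" and A :: "'a \<Rightarrow> 'a \<Rightarrow> real"
  assumes "finite V" and "V \<noteq> {}"
    and "\<forall>x\<in>V. \<forall>y\<in>V. A x y = A y x"
    and "\<not> has_sc_chordless_family V A"
  shows "\<exists>v\<in>V. simplicial V A v"
proof (rule ccontr)
  assume "\<not> ?thesis"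
  then have "\<forall>v\<in>V. \<exists>y z. walk V [y, v, z] \<and> weighted_chordless A [y, v, z]"
    using chordless_walk_through_non_simplicial[OF _ _ assms(3)] by blast
  then obtain y z where yz: "\<And>v. v \<in> V \<Longrightarrow>
      walk V [y v, v, z v] \<and> weighted_chordless A [y v, v, z v]"
    by (metis bchoice)
  define F where "F = (\<lambda>v. [y v, v, z v]) ` V"
  have "self_contained F"
    unfolding F_def using yz by (intro self_contained_centred_walks) (auto simp: walk_def)
  moreover have "finite F" "F \<noteq> {}"
    using assms(1,2) by (auto simp: F_def)
  moreover have "\<forall>W\<in>F. walk V W \<and> weighted_chordless A W"
    using yz by (auto simp: F_def)
  ultimately show False
    using assms(4) unfolding has_sc_chordless_family_def by blast
qed

end
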